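(* Let $F$ be a field of characteristic not $2$. Then every PC-map $\mathrm{UT}(3,F)\to\mathrm{UT}(3,F)$ is a composition of a permutable PC-map, a field automorphism, and a central PC-map.
   Context: $\mathrm{UT}(3,F)$ is the group of upper unitriangular $3\times3$ matrices over $F$; $a_{ij}$ denotes the $(i,j)$ entry, $e_{ij}$ the matrix unit, $t_{ij}(\alpha)=e+\alpha e_{ij}$. $[x,y]=xyx^{-1}y^{-1}$. A PC-map is a bijection $\varphi$ of the group with $\varphi([x,y])=[\varphi(x),\varphi(y)]$ for all $x,y$. A permutable PC-map is a map of the form $a\mapsto\begin{pmatrix}1&\alpha a_{12}+\beta a_{23}&(\alpha\delta-\beta\gamma)a_{13}\\0&1&\gamma a_{12}+\delta a_{23}\\0&0&1\end{pmatrix}$ with fixed $\alpha,\beta,\gamma,\delta\in F$, $\alpha\delta-\beta\gamma\ne0$. A field automorphism of $\mathrm{UT}(3,F)$ is the map $(a_{ij})\mapsto(\theta(a_{ij}))$ for a field automorphism $\theta$ of $F$. A central PC-map is a PC-map of the form $a\mapsto a\,t_{13}(f(a))$ for some function $f:\mathrm{UT}(3,F)\to F$. *)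

theory Defs
  imports Main
begin

text \<open>An element of UT(3,F) (upper unitriangular 3x3 matrix over F) is represented by
  the triple of its above-diagonal entries (a12, a23, a13).\<close>

type_synonym 'a ut3 = "'a \<times> 'a \<times> 'a"

definition a12 :: "'a ut3 \<Rightarrow> 'a" where "a12 x = fst x"
definition a23 :: "'a ut3 \<Rightarrow> 'a" where "a23 x = fst (snd x)"
definition a13 :: "'a ut3 \<Rightarrow> 'a" where "a13 x = snd (snd x)"

definition ut_mult :: "'a::field ut3 \<Rightarrow> 'a ut3 \<Rightarrow> 'a ut3" where
  "ut_mult x y = (a12 x + a12 y, a23 x + a23 y, a13 x + a13 y + a12 x * a23 y)"

definition ut_inv :: "'a::field ut3 \<Rightarrow> 'a ut3" where
  "ut_inv x = (- a12 x, - a23 x, a12 x * a23 x - a13 x)"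

definition ut_comm :: "'a::field ut3 \<Rightarrow> 'a ut3 \<Rightarrow> 'a ut3" where
  "ut_comm x y = ut_mult (ut_mult (ut_mult x y) (ut_inv x)) (ut_inv y)"

definition t13 :: "'a::field \<Rightarrow> 'a ut3" where
  "t13 \<alpha> = (0, 0, \<alpha>)"

definition PC_map :: "('a::field ut3 \<Rightarrow> 'a ut3) \<Rightarrow> bool" where
  "PC_map \<phi> \<longleftrightarrow> bij \<phi> \<and> (\<forall>x y. \<phi> (ut_comm x y) = ut_comm (\<phi> x) (\<phi> y))"

definition permutable_map :: "'a::field \<Rightarrow> 'a \<Rightarrow> 'a \<Rightarrow> 'a \<Rightarrow> 'a ut3 \<Rightarrow> 'a ut3" where
  "permutable_map \<alpha> \<beta> \<gamma> \<delta> a =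
     (\<alpha> * a12 a + \<beta> * a23 a, \<gamma> * a12 a + \<delta> * a23 a, (\<alpha> * \<delta> - \<beta> * \<gamma>) * a13 a)"

definition permutable_PC_map :: "('a::field ut3 \<Rightarrow> 'a ut3) \<Rightarrow> bool" where
  "permutable_PC_map \<psi> \<longleftrightarrow>
     (\<exists>\<alpha> \<beta> \<gamma> \<delta>. \<alpha> * \<delta> - \<beta> * \<gamma> \<noteq> 0 \<and> \<psi> = permutable_map \<alpha> \<beta> \<gamma> \<delta>)"

definition field_automorphism :: "('a::field \<Rightarrow> 'a) \<Rightarrow> bool" where
  "field_automorphism \<theta> \<longleftrightarrow> bij \<theta> \<and> (\<forall>x y. \<theta> (x + y) = \<theta> x + \<theta> y)
      \<and> (\<forall>x y. \<theta> (x * y) = \<theta> x * \<theta> y) \<and> \<theta> 1 = 1"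

definition ut_field_aut :: "('a::field \<Rightarrow> 'a) \<Rightarrow> 'a ut3 \<Rightarrow> 'a ut3" where
  "ut_field_aut \<theta> a = (\<theta> (a12 a), \<theta> (a23 a), \<theta> (a13 a))"

definition central_PC_map :: "('a::field ut3 \<Rightarrow> 'a ut3) \<Rightarrow> bool" where
  "central_PC_map \<psi> \<longleftrightarrow> PC_map \<psi> \<and> (\<exists>f. \<forall>a. \<psi> a = ut_mult a (t13 (f a)))"

end

theory Submission
  imports Defs
begin

text \<open>The commutator of two elements of UT(3,F) is the central element whose corner entry is
  the symplectic form of their (1,2),(2,3) entries. A PC-map \<open>\<phi>\<close> therefore maps the centre
  onto itself, via some bijection \<open>g\<close> of F, and transforms this form by \<open>g\<close>. Testing against the
  generators \<open>t12 1\<close> and \<open>t23 1\<close> shows by Cramer's rule that the non-central part of \<open>\<phi>\<close> is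
  a fixed invertible 2x2 matrix applied to the entries transformed by \<open>\<theta> = g / g 1\<close>, and \<open>\<theta>\<close>
  preserves all 2x2 determinants \<open>a b - c e\<close>, which forces it to be a field automorphism.
  What remains of \<open>\<phi>\<close> changes only the corner entry: it is a central PC-map.\<close>

definition t12 :: "'a::field \<Rightarrow> 'a ut3" where
  "t12 \<alpha> = (\<alpha>, 0, 0)"

definition t23 :: "'a::field \<Rightarrow> 'a ut3" where
  "t23 \<alpha> = (0, \<alpha>, 0)"

definition ut_comm_coeff :: "'a::field ut3 \<Rightarrow> 'a ut3 \<Rightarrow> 'a" where
  "ut_comm_coeff x y = a12 x * a23 y - a23 x * a12 y"

lemma ut_entries [simp]: "a12 (u, v, w) = u" "a23 (u, v, w) = v" "a13 (u, v, w) = w"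
  by (simp_all add: a12_def a23_def a13_def)

lemma ut3_eqI: "a12 x = a12 y \<Longrightarrow> a23 x = a23 y \<Longrightarrow> a13 x = a13 y \<Longrightarrow> x = y"
  by (simp add: a12_def a23_def a13_def prod_eq_iff)

lemma ut_comm_eq_t13: "ut_comm x y = t13 (ut_comm_coeff x y)"
  unfolding ut_comm_def ut_mult_def ut_inv_def t13_def ut_comm_coeff_def
  by (simp add: algebra_simps)

lemma t13_eq_ut_comm: "t13 c = ut_comm (t12 1) (t23 c)"
  by (simp add: ut_comm_eq_t13 ut_comm_coeff_def t12_def t23_def)

lemma cramer_2x2:
  fixes X Y :: "'a::field"
  assumes "X * \<delta> - Y * \<beta> = A" and "\<alpha> * Y - \<gamma> * X = B" and "\<alpha> * \<delta> - \<beta> * \<gamma> \<noteq> 0"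
  shows "X = (A * \<alpha> + B * \<beta>) / (\<alpha> * \<delta> - \<beta> * \<gamma>)"
    and "Y = (A * \<gamma> + B * \<delta>) / (\<alpha> * \<delta> - \<beta> * \<gamma>)"
proof -
  have "X * (\<alpha> * \<delta> - \<beta> * \<gamma>) = A * \<alpha> + B * \<beta>"
    and "Y * (\<alpha> * \<delta> - \<beta> * \<gamma>) = A * \<gamma> + B * \<delta>"
    unfolding assms(1,2)[symmetric] by (simp_all add: algebra_simps)
  with assms(3) show "X = (A * \<alpha> + B * \<beta>) / (\<alpha> * \<delta> - \<beta> * \<gamma>)"
    and "Y = (A * \<gamma> + B * \<delta>) / (\<alpha> * \<delta> - \<beta> * \<gamma>)"
    by (simp_all add: eq_divide_eq)
qed

lemma field_automorphismI_det:
  fixes \<theta> :: "'a::field \<Rightarrow> 'a"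
  assumes "bij \<theta>" and one: "\<theta> 1 = 1"
    and det: "\<And>a b c e. \<theta> (a * b - c * e) = \<theta> a * \<theta> b - \<theta> c * \<theta> e"
  shows "field_automorphism \<theta>"
proof -
  have zero: "\<theta> 0 = 0"
    using det[of 0 0 0 0] by simp
  have mult: "\<theta> (a * b) = \<theta> a * \<theta> b" for a b
    using det[of a b 0 0] zero by simp
  have diff: "\<theta> (a - b) = \<theta> a - \<theta> b" for a b
    using det[of a 1 b 1] one by simp
  have "\<theta> (a + b) = \<theta> a + \<theta> b" for a b
    using diff[of a "- b"] diff[of 0 b] zero by simp
  with assms(1) mult one show ?thesis
    unfolding field_automorphism_def by blast
qed

lemma bij_permutable_map:
  assumes det: "\<alpha> * \<delta> - \<beta> * \<gamma> \<noteq> 0"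
  shows "bij (permutable_map \<alpha> \<beta> \<gamma> \<delta>)"
proof (rule bijI)
  let ?\<pi> = "permutable_map \<alpha> \<beta> \<gamma> \<delta>"
  have solve: "a12 x * (\<alpha> * \<delta> - \<beta> * \<gamma>) = \<delta> * a12 (?\<pi> x) - \<beta> * a23 (?\<pi> x)"
    "a23 x * (\<alpha> * \<delta> - \<beta> * \<gamma>) = \<alpha> * a23 (?\<pi> x) - \<gamma> * a12 (?\<pi> x)"
    "a13 (?\<pi> x) = (\<alpha> * \<delta> - \<beta> * \<gamma>) * a13 x" for x
    by (simp_all add: permutable_map_def algebra_simps)
  show "inj ?\<pi>"
  proof (rule injI)
    fix x y
    assume "?\<pi> x = ?\<pi> y"
    then show "x = y"
      using solve[of x] solve[of y] det by (intro ut3_eqI) (metis mult_right_cancel mult_left_cancel)+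
  qed
  show "surj ?\<pi>"
  proof (rule surjI)
    fix z
    define D where "D = \<alpha> * \<delta> - \<beta> * \<gamma>"
    have "\<alpha> * (\<delta> * a12 z - \<beta> * a23 z) + \<beta> * (\<alpha> * a23 z - \<gamma> * a12 z) = a12 z * D"
      and "\<gamma> * (\<delta> * a12 z - \<beta> * a23 z) + \<delta> * (\<alpha> * a23 z - \<gamma> * a12 z) = a23 z * D"
      by (simp_all add: D_def algebra_simps)
    then show "?\<pi> ((\<delta> * a12 z - \<beta> * a23 z) / D, (\<alpha> * a23 z - \<gamma> * a12 z) / D, a13 z / D) = z"
      using det unfolding D_def[symmetric]
      by (intro ut3_eqI) (simp_all add: permutable_map_def flip: D_def, simp_all add: field_simps)
  qed
qed

lemma bij_ut_field_aut:
  assumes "bij \<theta>"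
  shows "bij (ut_field_aut \<theta>)"
proof (rule o_bij)
  show "ut_field_aut (inv \<theta>) \<circ> ut_field_aut \<theta> = id"
    using bij_is_inj[OF assms] by (intro ext ut3_eqI) (simp_all add: ut_field_aut_def)
  show "ut_field_aut \<theta> \<circ> ut_field_aut (inv \<theta>) = id"
    using bij_is_surj[OF assms] by (intro ext ut3_eqI) (simp_all add: ut_field_aut_def surj_f_inv_f)
qed

lemma central_PC_mapI:
  assumes "PC_map \<psi>" and "\<And>a. a12 (\<psi> a) = a12 a" and "\<And>a. a23 (\<psi> a) = a23 a"
  shows "central_PC_map \<psi>"
proof -
  have "\<psi> a = ut_mult a (t13 (a13 (\<psi> a) - a13 a))" for a
    using assms(2,3) by (intro ut3_eqI) (simp_all add: ut_mult_def t13_def)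
  with assms(1) show ?thesis
    unfolding central_PC_map_def by (intro conjI exI[of _ "\<lambda>a. a13 (\<psi> a) - a13 a"]) blast+
qed

locale UT3_PC_map =
  fixes \<phi> :: "'a::field ut3 \<Rightarrow> 'a ut3"
  assumes PC_map: "PC_map \<phi>"
begin

lemma bij: "bij \<phi>"
  and comm: "\<phi> (ut_comm x y) = ut_comm (\<phi> x) (\<phi> y)"
  using PC_map unfolding PC_map_def by blast+

definition centre_map :: "'a \<Rightarrow> 'a" where
  "centre_map c = a13 (\<phi> (t13 c))"

lemma image_t13: "\<phi> (t13 c) = t13 (centre_map c)"
proof -
  have "\<phi> (t13 c) = ut_comm (\<phi> (t12 1)) (\<phi> (t23 c))"
    by (subst t13_eq_ut_comm) (rule comm)
  then show ?thesis
    unfolding ut_comm_eq_t13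
    by (simp add: centre_map_def t13_def)
qed

lemma ut_comm_coeff_image:
  "ut_comm_coeff (\<phi> x) (\<phi> y) = centre_map (ut_comm_coeff x y)"
  using comm[of x y] image_t13[of "ut_comm_coeff x y"] by (simp add: ut_comm_eq_t13 t13_def)

lemma inj_centre_map: "inj centre_map"
  using bij_is_inj[OF bij] by (intro injI) (metis image_t13 injD prod.inject t13_def)

lemma centre_map_0: "centre_map 0 = 0"
  using ut_comm_coeff_image[of "t13 0" "t13 0"] by (simp add: ut_comm_coeff_def)

text \<open>An element whose image is central commutes with everything, because \<open>centre_map\<close> is
  injective; so it is central itself.\<close>
lemma surj_centre_map: "surj centre_map"
proof -
  have "c \<in> range centre_map" for c
  proof -
    obtain x where x: "\<phi> x = t13 c"
      using bij_is_surj[OF bij] by (metis surjD)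
    have "centre_map (ut_comm_coeff x y) = centre_map 0" for y
      using ut_comm_coeff_image[of x y] x by (simp add: centre_map_0 ut_comm_coeff_def t13_def)
    then have "ut_comm_coeff x y = 0" for y
      using inj_centre_map by (simp add: inj_eq)
    from this[of "t23 1"] this[of "t12 1"] have "x = t13 (a13 x)"
      by (intro ut3_eqI) (simp_all add: ut_comm_coeff_def t12_def t23_def t13_def)
    then have "centre_map (a13 x) = c"
      using x image_t13[of "a13 x"] by (simp add: t13_def)
    then show ?thesis
      by blast
  qed
  then show ?thesis
    by blast
qed

definition \<alpha> :: 'a where "\<alpha> = a12 (\<phi> (t12 1))"
definition \<beta> :: 'a where "\<beta> = a12 (\<phi> (t23 1))"
definition \<gamma> :: 'a where "\<gamma> = a23 (\<phi> (t12 1))"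
definition \<delta> :: 'a where "\<delta> = a23 (\<phi> (t23 1))"

definition \<Delta> :: 'a where "\<Delta> = \<alpha> * \<delta> - \<beta> * \<gamma>"

lemma \<Delta>_eq: "\<Delta> = centre_map 1"
  using ut_comm_coeff_image[of "t12 1" "t23 1"]
  by (simp add: \<Delta>_def \<alpha>_def \<beta>_def \<gamma>_def \<delta>_def ut_comm_coeff_def t12_def t23_def mult.commute)

lemma \<Delta>_nonzero: "\<Delta> \<noteq> 0"
  using \<Delta>_eq centre_map_0 inj_centre_map by (metis injD one_neq_zero)

definition \<theta> :: "'a \<Rightarrow> 'a" where
  "\<theta> c = centre_map c / \<Delta>"

lemma bij_\<theta>: "bij \<theta>"
proof -
  have "bij centre_map"
    by (simp add: bij_def inj_centre_map surj_centre_map)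
  moreover have "bij (\<lambda>c. c / \<Delta>)"
    using \<Delta>_nonzero by (intro o_bij[where g = "\<lambda>c. c * \<Delta>"]) (auto simp: fun_eq_iff)
  ultimately have "bij ((\<lambda>c. c / \<Delta>) \<circ> centre_map)"
    by (rule bij_comp)
  then show ?thesis
    by (simp add: \<theta>_def[abs_def] comp_def)
qed

lemma a12_image: "a12 (\<phi> x) = \<alpha> * \<theta> (a12 x) + \<beta> * \<theta> (a23 x)"
  and a23_image: "a23 (\<phi> x) = \<gamma> * \<theta> (a12 x) + \<delta> * \<theta> (a23 x)"
proof -
  have "a12 (\<phi> x) * \<delta> - a23 (\<phi> x) * \<beta> = centre_map (a12 x)"
    using ut_comm_coeff_image[of x "t23 1"] by (simp add: ut_comm_coeff_def t23_def \<beta>_def \<delta>_def)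
  moreover have "\<alpha> * a23 (\<phi> x) - \<gamma> * a12 (\<phi> x) = centre_map (a23 x)"
    using ut_comm_coeff_image[of "t12 1" x] by (simp add: ut_comm_coeff_def t12_def \<alpha>_def \<gamma>_def)
  moreover have "\<alpha> * \<delta> - \<beta> * \<gamma> \<noteq> 0"
    using \<Delta>_nonzero by (simp add: \<Delta>_def)
  ultimately have "a12 (\<phi> x) = (centre_map (a12 x) * \<alpha> + centre_map (a23 x) * \<beta>) / \<Delta>"
    and "a23 (\<phi> x) = (centre_map (a12 x) * \<gamma> + centre_map (a23 x) * \<delta>) / \<Delta>"
    unfolding \<Delta>_def by (rule cramer_2x2)+
  then show "a12 (\<phi> x) = \<alpha> * \<theta> (a12 x) + \<beta> * \<theta> (a23 x)"
    and "a23 (\<phi> x) = \<gamma> * \<theta> (a12 x) + \<delta> * \<theta> (a23 x)"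
    by (simp_all add: \<theta>_def add_divide_distrib mult.commute)
qed

lemma \<theta>_det: "\<theta> (a * b - c * e) = \<theta> a * \<theta> b - \<theta> c * \<theta> e"
proof -
  have "centre_map (a * b - c * e) = ut_comm_coeff (\<phi> (a, c, 0)) (\<phi> (e, b, 0))"
    using ut_comm_coeff_image[of "(a, c, 0)" "(e, b, 0)"] by (simp add: ut_comm_coeff_def)
  also have "\<dots> = (\<theta> a * \<theta> b - \<theta> c * \<theta> e) * \<Delta>"
    by (simp add: ut_comm_coeff_def a12_image a23_image \<Delta>_def algebra_simps)
  finally show ?thesis
    using \<Delta>_nonzero by (simp add: \<theta>_def)
qed

lemma \<theta>_1: "\<theta> 1 = 1"
  using \<Delta>_nonzero by (simp add: \<theta>_def \<Delta>_eq)

definition \<kappa> :: "'a ut3 \<Rightarrow> 'a ut3" where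
  "\<kappa> x = (a12 x, a23 x, inv \<theta> (a13 (\<phi> x) / \<Delta>))"

lemma decomposition: "\<phi> = permutable_map \<alpha> \<beta> \<gamma> \<delta> \<circ> ut_field_aut \<theta> \<circ> \<kappa>"
proof
  fix x
  have "\<theta> (inv \<theta> (a13 (\<phi> x) / \<Delta>)) = a13 (\<phi> x) / \<Delta>"
    using bij_is_surj[OF bij_\<theta>] by (simp add: surj_f_inv_f)
  then show "\<phi> x = (permutable_map \<alpha> \<beta> \<gamma> \<delta> \<circ> ut_field_aut \<theta> \<circ> \<kappa>) x"
    using \<Delta>_nonzero
    by (intro ut3_eqI) (simp_all add: permutable_map_def ut_field_aut_def \<kappa>_def a12_image a23_image flip: \<Delta>_def)
qed

lemma \<kappa>_t13: "\<kappa> (t13 c) = t13 c"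
proof -
  have "a13 (\<phi> (t13 c)) / \<Delta> = \<theta> c"
    unfolding image_t13 by (simp add: \<theta>_def t13_def)
  then show ?thesis
    using bij_is_inj[OF bij_\<theta>] by (simp add: \<kappa>_def t13_def)
qed

lemma central_PC_map_\<kappa>: "central_PC_map \<kappa>"
proof (rule central_PC_mapI)
  let ?h = "permutable_map \<alpha> \<beta> \<gamma> \<delta> \<circ> ut_field_aut \<theta>"
  have h: "bij ?h"
    using \<Delta>_nonzero bij_\<theta> unfolding \<Delta>_def by (intro bij_comp bij_permutable_map bij_ut_field_aut)
  have "inv ?h \<circ> \<phi> = inv ?h \<circ> (?h \<circ> \<kappa>)"
    using decomposition by (rule arg_cong)
  also have "\<dots> = inv ?h \<circ> ?h \<circ> \<kappa>"
    by (rule o_assoc)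
  also have "\<dots> = \<kappa>"
    using bij_is_inj[OF h] by simp
  finally have "\<kappa> = inv ?h \<circ> \<phi>"
    by simp
  then have "bij \<kappa>"
    using bij h by (simp add: bij_comp bij_imp_bij_inv)
  moreover have "\<kappa> (ut_comm x y) = ut_comm (\<kappa> x) (\<kappa> y)" for x y
    by (simp add: ut_comm_eq_t13 \<kappa>_t13) (simp add: \<kappa>_def ut_comm_coeff_def)
  ultimately show "PC_map \<kappa>"
    unfolding PC_map_def by blast
qed (simp_all add: \<kappa>_def)

end

theorem mainTheorem9:
  fixes \<phi> :: "'a::field ut3 \<Rightarrow> 'a ut3"
  assumes "CHAR('a) \<noteq> 2"
    and "PC_map \<phi>"
  shows "\<exists>\<pi> \<theta> \<kappa>. permutable_PC_map \<pi> \<and> field_automorphism \<theta> \<and> central_PC_map \<kappa>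
           \<and> \<phi> = \<pi> \<circ> ut_field_aut \<theta> \<circ> \<kappa>"
proof -
  interpret UT3_PC_map \<phi>
    using assms(2) by unfold_locales
  have "permutable_PC_map (permutable_map \<alpha> \<beta> \<gamma> \<delta>)"
    using \<Delta>_nonzero unfolding permutable_PC_map_def \<Delta>_def by blast
  moreover have "field_automorphism \<theta>"
    using bij_\<theta> \<theta>_1 \<theta>_det by (rule field_automorphismI_det)
  ultimately show ?thesis
    using central_PC_map_\<kappa> decomposition by blast
qed

end
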